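(* Let $\alpha\in(0,1)$, let $N\ge1$ and $M>1+\frac{N}{\alpha}$ be integers, and let $\{\mathcal U_1,\dots,\mathcal U_M\}$ be a $(\Gamma,\Delta)$ set system over $[N]$. Then $$\frac{\Delta}{\Gamma}\ge(1-\alpha)\,h_2^{-1}\!\left(\frac{\log_2 M}{N}\right).$$
   Context: For integers $N,M\ge1$ and $\Delta<\Gamma<N$, a $(\Gamma,\Delta)$ set system over $[N]=\{1,\dots,N\}$ is a collection $\{\mathcal U_1,\dots,\mathcal U_M\}$ of $M$ distinct subsets of $[N]$, each of size $\Gamma$, with $\Delta=\max_{i\ne j}|\mathcal U_i\cap\mathcal U_j|$. $h_2(p)=-p\log_2p-(1-p)\log_2(1-p)$ is the binary entropy function and $h_2^{-1}:[0,1]\to[0,1/2]$ is the inverse of its restriction to $[0,1/2]$. *)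

theory Defs
  imports Complex_Main
begin

text \<open>Binary entropy function h2(p) = -p log2 p - (1-p) log2 (1-p); with Isabelle's
  convention log 2 0 = 0 this gives h2 0 = h2 1 = 0, matching 0 log 0 = 0.\<close>
definition h2 :: "real \<Rightarrow> real" where
  "h2 p = - p * log 2 p - (1 - p) * log 2 (1 - p)"

definition h2_inv :: "real \<Rightarrow> real" where
  "h2_inv y = (THE p. p \<in> {0..1/2} \<and> h2 p = y)"

definition set_system :: "nat \<Rightarrow> nat \<Rightarrow> nat \<Rightarrow> nat \<Rightarrow> nat set set \<Rightarrow> bool" where
  "set_system N M \<Gamma> \<Delta> F \<longleftrightarrow>
     F \<subseteq> Pow {1..N} \<and> card F = M \<and> (\<forall>U\<in>F. card U = \<Gamma>) \<and>
     \<Delta> < \<Gamma> \<and> \<Gamma> < N \<and>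
     \<Delta> = Max {card (U \<inter> V) | U V. U \<in> F \<and> V \<in> F \<and> U \<noteq> V}"

end

theory Submission
  imports Defs "HOL-Analysis.Convex" "HOL-Real_Asymp.Real_Asymp"
begin

text \<open>Count incidences between the points of [N] and the M members. The degrees sum to
  M\<Gamma> and their squares sum to at most M(\<Gamma> + (M - 1)\<Delta>), so Cauchy-Schwarz gives
  M\<Gamma>^2 \<le> N(\<Gamma> + (M - 1)\<Delta>); when \<alpha>(M - 1) > N this forces
  \<Delta>/\<Gamma> \<ge> (1 - \<alpha>)\<Gamma>/N. On the other hand the M members are among the
  (N choose \<Gamma>) \<le> 2^(N h2(\<Gamma>/N)) subsets of size \<Gamma>, so h2(\<Gamma>/N) \<ge> log2 M / N and
  hence \<Gamma>/N \<ge> h2_inv(log2 M / N).\<close>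

lemma h2_one_minus: "h2 (1 - p) = h2 p"
  unfolding h2_def by (simp add: algebra_simps)

lemma h2_tendsto_0: "(h2 \<longlongrightarrow> 0) (at_right 0)"
proof -
  have "((\<lambda>p::real. - p * (ln p / ln 2) - (1 - p) * (ln (1 - p) / ln 2)) \<longlongrightarrow> 0) (at_right 0)"
    by real_asymp
  then show ?thesis unfolding h2_def log_def by simp
qed

lemma h2_pos: assumes "0 < p" "p < 1" shows "0 < h2 p"
proof -
  have "log 2 p < 0" "log 2 (1 - p) < 0"
    using assms by auto
  then have "p * log 2 p < 0" "(1 - p) * log 2 (1 - p) < 0"
    using assms by (auto simp: mult_pos_neg)
  then show ?thesis unfolding h2_def by linarith
qed

lemma h2_has_real_derivative:
  assumes "0 < p" "p < 1"
  shows "(h2 has_real_derivative log 2 ((1 - p) / p)) (at p)"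
proof -
  have "h2 = (\<lambda>p. - p * (ln p / ln 2) - (1 - p) * (ln (1 - p) / ln 2))"
    by (simp add: fun_eq_iff h2_def log_def)
  moreover have "log 2 ((1 - p) / p) = (ln (1 - p) - ln p) / ln 2"
    using assms by (simp add: log_def ln_div)
  moreover have "((\<lambda>p. - p * (ln p / ln 2) - (1 - p) * (ln (1 - p) / ln 2))
      has_real_derivative (ln (1 - p) - ln p) / ln 2) (at p)"
    using assms by (auto intro!: derivative_eq_intros) (simp add: field_simps)
  ultimately show ?thesis by simp
qed

lemma isCont_h2: "0 < p \<Longrightarrow> p < 1 \<Longrightarrow> isCont h2 p"
  using h2_has_real_derivative DERIV_isCont by blast

lemma h2_strict_mono_on: "strict_mono_on {0..1/2} h2"
proof (rule strict_mono_onI)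
  fix a b :: real assume "a \<in> {0..1/2}" "b \<in> {0..1/2}" "a < b"
  then have ab: "0 \<le> a" "a < b" "b \<le> 1/2" by auto
  show "h2 a < h2 b"
  proof (cases "a = 0")
    case True
    then show ?thesis using h2_pos[of b] ab by (simp add: h2_def)
  next
    case False
    show ?thesis
    proof (rule DERIV_pos_imp_increasing_open[OF ab(2)])
      fix x assume x: "a < x" "x < b"
      then have "1 < (1 - x) / x" using ab by (simp add: field_simps)
      then show "\<exists>y. DERIV h2 x :> y \<and> 0 < y"
        using x ab h2_has_real_derivative[of x] by auto
    next
      show "continuous_on {a..b} h2"
        using ab False by (intro continuous_at_imp_continuous_on ballI isCont_h2) auto
    qed
  qed
qed

lemma h2_inv_h2: "p \<in> {0..1/2} \<Longrightarrow> h2_inv (h2 p) = p"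
  unfolding h2_inv_def
  by (rule the_equality) (auto dest: strict_mono_on_eqD[OF h2_strict_mono_on])

text \<open>Since h2 tends to 0 at the left end, the intermediate value theorem on a small
  interval [a, g] reaches every level 0 < y \<le> h2 g.\<close>
lemma h2_attains:
  assumes "0 < y" "y \<le> h2 g" "0 < g" "g < 1"
  shows "\<exists>p\<in>{0<..g}. h2 p = y"
proof -
  have "\<forall>\<^sub>F p in at_right 0. h2 p < y \<and> p \<in> {0<..<g}"
    using order_tendstoD(2)[OF h2_tendsto_0 assms(1)] eventually_at_right_real[OF assms(3)]
    by (rule eventually_conj)
  then obtain a where a: "h2 a < y" "0 < a" "a < g"
    using eventually_happens trivial_limit_at_right_real by fastforce
  have "\<exists>p. a \<le> p \<and> p \<le> g \<and> h2 p = y"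
    using a assms by (intro IVT) (auto intro!: isCont_h2)
  then show ?thesis using a by force
qed

lemma h2_inv_le:
  assumes "0 < y" "y \<le> h2 g" "0 < g" "g < 1"
  shows "h2_inv y \<le> g"
proof -
  define g' where "g' = min g (1 - g)"
  have "h2 g' = h2 g"
    unfolding g'_def by (cases "g \<le> 1 - g") (auto simp: min_def h2_one_minus)
  moreover have "0 < g'" "g' < 1" using assms(3,4) by (auto simp: g'_def)
  ultimately obtain p where p: "0 < p" "p \<le> g'" "h2 p = y"
    using h2_attains[of y g'] assms(1,2) by auto
  have "h2_inv y = p"
    using h2_inv_h2[of p] p by (auto simp: g'_def)
  then show ?thesis using p by (simp add: g'_def)
qed

lemma log_binomial_le_entropy:
  assumes "0 < k" "k < n"
  shows "log 2 (real (n choose k)) \<le> real n * h2 (real k / real n)"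
proof -
  define p where "p = real k / real n"
  have p: "0 < p" "p < 1" using assms by (auto simp: p_def)
  have "real (n choose k) * p ^ k * (1 - p) ^ (n - k) \<le> (\<Sum>i\<le>n. real (n choose i) * p ^ i * (1 - p) ^ (n - i))"
    using assms p by (intro member_le_sum) auto
  also have "\<dots> = 1"
    using binomial_ring[of p "1 - p" n] by simp
  finally have "log 2 (real (n choose k) * (p ^ k * (1 - p) ^ (n - k))) \<le> 0"
    using assms p by (subst log_le_zero_cancel_iff) (auto simp: mult.assoc)
  then have "log 2 (real (n choose k)) + (real k * log 2 p + real (n - k) * log 2 (1 - p)) \<le> 0"
    using assms p by (simp add: log_mult log_nat_power)
  moreover have "real k = real n * p" "real (n - k) = real n * (1 - p)"
    using assms by (auto simp: p_def of_nat_diff field_simps)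
  ultimately show ?thesis unfolding p_def[symmetric] h2_def by (simp add: algebra_simps)
qed

definition degree :: "'a set set \<Rightarrow> 'a \<Rightarrow> nat" where
  "degree F x = card {U \<in> F. x \<in> U}"

lemma degree_eq_sum: "finite F \<Longrightarrow> degree F x = (\<Sum>U\<in>F. of_bool (x \<in> U))"
  by (simp add: degree_def Int_def)

lemma sum_degree:
  assumes "finite S" "finite F" "F \<subseteq> Pow S"
  shows "(\<Sum>x\<in>S. degree F x) = (\<Sum>U\<in>F. card U)"
proof -
  have "(\<Sum>x\<in>S. degree F x) = (\<Sum>U\<in>F. \<Sum>x\<in>S. of_bool (x \<in> U))"
    using assms(2) by (simp add: degree_eq_sum sum.swap[of _ S])
  also have "\<dots> = (\<Sum>U\<in>F. card U)"
    using assms by (intro sum.cong refl) (auto simp: Int_absorb1 Int_def[symmetric])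
  finally show ?thesis .
qed

lemma sum_degree_squared:
  assumes "finite S" "finite F" "F \<subseteq> Pow S"
  shows "(\<Sum>x\<in>S. (degree F x)\<^sup>2) = (\<Sum>U\<in>F. \<Sum>V\<in>F. card (U \<inter> V))"
proof -
  have "(\<Sum>x\<in>S. (degree F x)\<^sup>2) = (\<Sum>x\<in>S. \<Sum>U\<in>F. \<Sum>V\<in>F. of_bool (x \<in> U \<inter> V))"
    unfolding degree_eq_sum[OF assms(2)] power2_eq_square sum_product
    by (simp only: Int_iff of_bool_conj)
  also have "\<dots> = (\<Sum>U\<in>F. \<Sum>V\<in>F. \<Sum>x\<in>S. of_bool (x \<in> U \<inter> V))"
    by (subst sum.swap) (intro sum.cong refl sum.swap)
  also have "\<dots> = (\<Sum>U\<in>F. \<Sum>V\<in>F. card (U \<inter> V))"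
    using assms by (intro sum.cong refl) (auto intro!: arg_cong[where f = card])
  finally show ?thesis .
qed

lemma sum_card_Int_le:
  assumes "finite F" "\<forall>U\<in>F. card U = G"
    and "\<forall>U\<in>F. \<forall>V\<in>F. U \<noteq> V \<longrightarrow> card (U \<inter> V) \<le> D"
  shows "(\<Sum>U\<in>F. \<Sum>V\<in>F. card (U \<inter> V)) \<le> card F * (G + (card F - 1) * D)"
proof -
  have "(\<Sum>V\<in>F. card (U \<inter> V)) \<le> G + (card F - 1) * D" if U: "U \<in> F" for U
  proof -
    have "(\<Sum>V\<in>F. card (U \<inter> V)) = card U + (\<Sum>V\<in>F - {U}. card (U \<inter> V))"
      using U assms(1) by (simp add: sum.remove)
    also have "(\<Sum>V\<in>F - {U}. card (U \<inter> V)) \<le> (\<Sum>V\<in>F - {U}. D)"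
      using assms(3) U by (intro sum_mono) auto
    also have "(\<Sum>V\<in>F - {U}. D) = (card F - 1) * D"
      using U assms(1) by simp
    finally show ?thesis using assms(2) U by simp
  qed
  then have "(\<Sum>U\<in>F. \<Sum>V\<in>F. card (U \<inter> V)) \<le> (\<Sum>U\<in>F. G + (card F - 1) * D)"
    by (rule sum_mono)
  then show ?thesis by simp
qed

lemma card_mult_sq_le_intersections:
  assumes "finite S" "F \<subseteq> Pow S" "\<forall>U\<in>F. card U = G"
    and "\<forall>U\<in>F. \<forall>V\<in>F. U \<noteq> V \<longrightarrow> card (U \<inter> V) \<le> D"
  shows "card F * G\<^sup>2 \<le> card S * (G + (card F - 1) * D)"
proof -
  have F: "finite F" using assms(1,2) by (meson finite_Pow_iff finite_subset)
  have "real ((\<Sum>x\<in>S. degree F x)\<^sup>2) \<le> real (\<Sum>x\<in>S. (degree F x)\<^sup>2) * card S"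
    using sum_squared_le_sum_of_squares[of "\<lambda>x. real (degree F x)" S] by simp
  then have "(\<Sum>x\<in>S. degree F x)\<^sup>2 \<le> (\<Sum>x\<in>S. (degree F x)\<^sup>2) * card S"
    by (metis of_nat_le_iff of_nat_mult)
  then have "(card F * G)\<^sup>2 \<le> card S * (card F * (G + (card F - 1) * D))"
    using sum_degree[OF assms(1) F assms(2)] sum_degree_squared[OF assms(1) F assms(2)]
      sum_card_Int_le[OF F assms(3,4)] assms(3)
    by (simp add: mult.commute) (meson le_trans mult_le_mono2)
  then have "card F * (card F * G\<^sup>2) \<le> card F * (card S * (G + (card F - 1) * D))"
    by (simp add: power2_eq_square algebra_simps)
  then show ?thesis
    by (cases "card F = 0") auto
qed

lemma second_moment_ratio_bound:
  fixes m n g d \<alpha> :: real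
  assumes "m * g\<^sup>2 \<le> n * (g + (m - 1) * d)" "0 \<le> n" "n < \<alpha> * (m - 1)"
    and "0 < \<alpha>" "1 \<le> g"
  shows "(1 - \<alpha>) * g\<^sup>2 \<le> n * d"
proof -
  have "0 < \<alpha> * (m - 1)" using assms(2,3) by linarith
  then have m: "0 < m - 1" using assms(4) by (simp add: zero_less_mult_iff)
  have "n * g \<le> \<alpha> * (m - 1) * g"
    using assms(3,5) by (intro mult_right_mono) auto
  also have "\<dots> \<le> \<alpha> * (m - 1) * g\<^sup>2"
    using \<open>0 < \<alpha> * (m - 1)\<close> mult_left_mono[of 1 g g] assms(5)
    by (intro mult_left_mono) (auto simp: power2_eq_square)
  finally have "n * g \<le> \<alpha> * (m - 1) * g\<^sup>2" .
  then have "(m - 1) * ((1 - \<alpha>) * g\<^sup>2) \<le> (m - 1) * (n * d)"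
    using assms(1) by (simp add: algebra_simps) (smt (verit) zero_le_power2)
  then show ?thesis using m by simp
qed

lemma set_system_card_Int_le:
  assumes "set_system N M \<Gamma> \<Delta> F" "U \<in> F" "V \<in> F" "U \<noteq> V"
  shows "card (U \<inter> V) \<le> \<Delta>"
proof -
  have "finite F"
    using assms(1) finite_subset unfolding set_system_def by blast
  moreover have "{card (U \<inter> V) | U V. U \<in> F \<and> V \<in> F \<and> U \<noteq> V} \<subseteq> (\<lambda>(U, V). card (U \<inter> V)) ` (F \<times> F)"
    by auto
  ultimately have "finite {card (U \<inter> V) | U V. U \<in> F \<and> V \<in> F \<and> U \<noteq> V}"
    by (meson finite_SigmaI finite_imageI finite_subset)
  then show ?thesis
    using assms unfolding set_system_def by (blast intro: Max_ge)
qed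

lemma set_system_card_le_binomial:
  assumes "set_system N M \<Gamma> \<Delta> F"
  shows "M \<le> N choose \<Gamma>"
  using assms card_mono[of "{B. B \<subseteq> {1..N} \<and> card B = \<Gamma>}" F]
  unfolding set_system_def by (auto simp: n_subsets)

lemma set_system_h2_inv_le:
  assumes "set_system N M \<Gamma> \<Delta> F" "2 \<le> M"
  shows "h2_inv (log 2 (real M) / real N) \<le> real \<Gamma> / real N"
proof -
  have "\<Delta> < \<Gamma>" "\<Gamma> < N" using assms(1) unfolding set_system_def by auto
  have "log 2 (real M) \<le> log 2 (real (N choose \<Gamma>))"
    using set_system_card_le_binomial[OF assms(1)] assms(2) \<open>\<Gamma> < N\<close>
    by (subst log_le_cancel_iff) auto
  also have "\<dots> \<le> real N * h2 (real \<Gamma> / real N)"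
    using \<open>\<Delta> < \<Gamma>\<close> \<open>\<Gamma> < N\<close> by (intro log_binomial_le_entropy) auto
  finally show ?thesis
    using assms(2) \<open>\<Delta> < \<Gamma>\<close> \<open>\<Gamma> < N\<close> by (intro h2_inv_le) (auto simp: field_simps)
qed

lemma set_system_intersection_ratio:
  fixes \<alpha> :: real
  assumes "set_system N M \<Gamma> \<Delta> F" "0 < \<alpha>" "real N < \<alpha> * (real M - 1)"
  shows "(1 - \<alpha>) * (real \<Gamma> / real N) \<le> real \<Delta> / real \<Gamma>"
proof -
  have FS: "F \<subseteq> Pow {1..N}" and M: "card F = M" and G: "\<forall>U\<in>F. card U = \<Gamma>"
    and "\<Delta> < \<Gamma>" "\<Gamma> < N"
    using assms(1) unfolding set_system_def by auto
  have "1 \<le> M"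
    using assms(2,3) by (cases M) (auto simp: mult_pos_neg)
  have "M * \<Gamma>\<^sup>2 \<le> N * (\<Gamma> + (M - 1) * \<Delta>)"
    using card_mult_sq_le_intersections[OF _ FS G] set_system_card_Int_le[OF assms(1)] M by simp
  then have "real (M * \<Gamma>\<^sup>2) \<le> real (N * (\<Gamma> + (M - 1) * \<Delta>))"
    by (simp only: of_nat_le_iff)
  then have "real M * (real \<Gamma>)\<^sup>2 \<le> real N * (real \<Gamma> + (real M - 1) * real \<Delta>)"
    using \<open>1 \<le> M\<close> by (simp add: of_nat_diff)
  then have "(1 - \<alpha>) * (real \<Gamma>)\<^sup>2 \<le> real N * real \<Delta>"
    using \<open>\<Delta> < \<Gamma>\<close> assms(2,3) by (intro second_moment_ratio_bound) auto
  then show ?thesis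
    using \<open>\<Delta> < \<Gamma>\<close> \<open>\<Gamma> < N\<close> by (simp add: field_simps power2_eq_square)
qed

theorem proposition2:
  fixes \<alpha> :: real and N M \<Gamma> \<Delta> :: nat and F :: "nat set set"
  assumes "0 < \<alpha>" and "\<alpha> < 1"
    and "N \<ge> 1"
    and "real M > 1 + real N / \<alpha>"
    and "set_system N M \<Gamma> \<Delta> F"
  shows "real \<Delta> / real \<Gamma> \<ge> (1 - \<alpha>) * h2_inv (log 2 (real M) / real N)"
proof -
  have N\<alpha>: "real N < \<alpha> * (real M - 1)"
    using assms(1,4) by (simp add: field_simps)
  have "0 < real N / \<alpha>" using assms(1,3) by simp
  then have "2 \<le> M" using assms(4) by linarith
  have "(1 - \<alpha>) * h2_inv (log 2 (real M) / real N) \<le> (1 - \<alpha>) * (real \<Gamma> / real N)"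
    using set_system_h2_inv_le[OF assms(5) \<open>2 \<le> M\<close>] assms(2) by (intro mult_left_mono) auto
  also have "\<dots> \<le> real \<Delta> / real \<Gamma>"
    using set_system_intersection_ratio[OF assms(5,1) N\<alpha>] .
  finally show ?thesis .
qed

end
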